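(* Let $k\ge1$ and $n\ge k+1$. Every permutation $\sigma\in\mathcal{S}_{n,k}^{1\prec n}(1324)$ can be written uniquely as $\sigma=\sigma_1\odot(\sigma_2\odot(\cdots\odot\sigma_k))$ where each $\sigma_j$ is a primitive, i.e. $\sigma_j\in\mathcal{S}_{m_j,1}^{1\prec m_j}(1324)$ for some $m_j\ge2$ (and then $m_1+\cdots+m_k=n+k-1$).
   Context: $\mathcal{S}_n(1324)$ denotes the set of permutations of $\{1,\dots,n\}$ (in one-line notation) avoiding the pattern $1324$. For $a,k\ge1$, $\mathcal{S}_{n,k}^{a\prec n}(1324)$ is the set of $\sigma\in\mathcal{S}_n(1324)$ with $\sigma^{-1}(n)-\sigma^{-1}(a)=k$ and $\sigma^{-1}(b)>\sigma^{-1}(n)$ for all $b\in\{1,\dots,a-1\}$. Elements of $\mathcal{S}_{m,1}^{1\prec m}(1324)$ are called primitives; such a permutation has the form $\sigma_1=\pi_1\,1\,m\,\tau_1$. Given a primitive $\sigma_1=\pi_1\,1\,m\,\tau_1$ of size $m$ and $\sigma_2\in\mathcal{S}_\ell(1324)$ of the form $\sigma_2=\pi_2\,1\,\theta_2\,\ell\,\tau_2$ (words possibly empty), the product is $\sigma_1\odot\sigma_2=\widehat{\pi}_2\,\pi_1\,1\,m\,\widehat{\theta}_2\,n\,\widehat{\tau}_2\,\tau_1$, where $n=\ell+m-1$ and hats denote adding $m-1$ to each entry. *)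

theory Defs
  imports Main
begin

definition is_perm :: "nat \<Rightarrow> nat list \<Rightarrow> bool" where
  "is_perm n xs \<longleftrightarrow> length xs = n \<and> distinct xs \<and> set xs = {1..n}"

definition contains_1324 :: "nat list \<Rightarrow> bool" where
  "contains_1324 xs \<longleftrightarrow> (\<exists>i j k l. i < j \<and> j < k \<and> k < l \<and> l < length xs \<and>
      xs ! i < xs ! k \<and> xs ! k < xs ! j \<and> xs ! j < xs ! l)"

definition avoids_1324 :: "nat \<Rightarrow> nat list set" where
  "avoids_1324 n = {xs. is_perm n xs \<and> \<not> contains_1324 xs}"

text \<open>Position (0-based) of value v, i.e. sigma^{-1}(v) - 1.\<close>
definition pos :: "nat list \<Rightarrow> nat \<Rightarrow> nat" where
  "pos xs v = (LEAST i. i < length xs \<and> xs ! i = v)"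

definition S_prec :: "nat \<Rightarrow> nat \<Rightarrow> nat \<Rightarrow> nat list set" where
  "S_prec n k a = {xs \<in> avoids_1324 n. int (pos xs n) - int (pos xs a) = int k \<and>
      (\<forall>b\<in>{1..<a}. pos xs b > pos xs n)}"

definition primitive :: "nat list \<Rightarrow> bool" where
  "primitive p \<longleftrightarrow> (\<exists>m\<ge>2. p \<in> S_prec m 1 1)"

text \<open>The product sigma1 \<odot> sigma2, for sigma1 = pi1 1 m tau1 primitive of size m and
  sigma2 = pi2 1 theta2 l tau2.\<close>
definition odot :: "nat list \<Rightarrow> nat list \<Rightarrow> nat list" where
  "odot s1 s2 = (let m = length s1; l = length s2;
      i1 = pos s1 1; pi1 = take i1 s1; tau1 = drop (i1 + 2) s1;
      j1 = pos s2 1; jl = pos s2 l;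
      pi2 = take j1 s2; theta2 = take (jl - j1 - 1) (drop (j1 + 1) s2);
      tau2 = drop (jl + 1) s2;
      hat = map (\<lambda>x. x + (m - 1))
    in hat pi2 @ pi1 @ [1, m] @ hat theta2 @ [l + m - 1] @ hat tau2 @ tau1)"

fun odot_chain :: "nat list list \<Rightarrow> nat list" where
  "odot_chain [] = []"
| "odot_chain [p] = p"
| "odot_chain (p # ps) = odot p (odot_chain ps)"

end

theory Submission
  imports Defs "HOL-Library.Sublist"
begin

text \<open>
  Let \<open>\<sigma>\<close> avoid 1324 with \<open>n\<close> occurring \<open>k \<ge> 2\<close> places after \<open>1\<close>, and let \<open>m\<close> be the entry
  right after \<open>1\<close>. Avoidance forces every entry placed between \<open>m\<close> and \<open>n\<close> to exceed \<open>m\<close>,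
  and splits the parts before \<open>1\<close> and after \<open>n\<close> each into a block of entries above \<open>m\<close>
  followed by a block of entries below \<open>m\<close>. Hence the entries \<open>\<le> m\<close> form a primitive
  \<open>\<sigma>\<^sub>1\<close> of size \<open>m\<close>, the entries \<open>\<ge> m\<close> shifted down by \<open>m - 1\<close> form an element
  \<open>\<sigma>\<^sub>2\<close> of \<open>S_{n-m+1,k-1}\<close>, and \<open>\<sigma> = \<sigma>\<^sub>1 \<odot> \<sigma>\<^sub>2\<close>; induction on \<open>k\<close> gives a
  factorisation. Conversely, in any product \<open>\<sigma>\<^sub>1 \<odot> \<tau>\<close> the size of \<open>\<sigma>\<^sub>1\<close> is the
  entry following \<open>1\<close>, and both factors are recovered by the same filtering, so the
  factorisation is unique. Each product step adds \<open>m - 1\<close> to the size, which gives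
  \<open>m\<^sub>1 + \<dots> + m\<^sub>k = n + k - 1\<close>.
\<close>

section \<open>Permutations in one-line notation\<close>

abbreviation shift :: "nat \<Rightarrow> nat list \<Rightarrow> nat list" where
  "shift c \<equiv> map (\<lambda>x. x + c)"

abbreviation unshift :: "nat \<Rightarrow> nat list \<Rightarrow> nat list" where
  "unshift c \<equiv> map (\<lambda>x. x - c)"

lemma pos_append_Cons:
  assumes "distinct (A @ v # B)"
  shows "pos (A @ v # B) v = length A"
  unfolding pos_def
proof (rule Least_equality)
  fix i assume "i < length (A @ v # B) \<and> (A @ v # B) ! i = v"
  with assms show "length A \<le> i"
    using nth_eq_iff_index_eq[of "A @ v # B" i "length A"] by auto
qed simp

lemma is_permI:
  assumes "set xs = {1..n}" and "length xs = n"
  shows "is_perm n xs"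
  using assms card_distinct[of xs] unfolding is_perm_def by simp

lemma is_perm_inner_bounds:
  assumes "is_perm n (A @ 1 # Q @ n # T)" and "x \<in> set A \<union> set Q \<union> set T"
  shows "1 < x \<and> x < n"
proof -
  have "x \<in> {1..n}" "x \<noteq> 1" "x \<noteq> n"
    using assms unfolding is_perm_def by auto
  then show ?thesis by auto
qed

lemma is_perm_filter_le:
  assumes "is_perm n \<sigma>" and "m \<le> n"
  shows "is_perm m (filter (\<lambda>x. x \<le> m) \<sigma>)"
proof (rule is_permI)
  show "set (filter (\<lambda>x. x \<le> m) \<sigma>) = {1..m}"
    using assms unfolding is_perm_def by auto
  then show "length (filter (\<lambda>x. x \<le> m) \<sigma>) = m"
    using assms distinct_card[of "filter (\<lambda>x. x \<le> m) \<sigma>"] unfolding is_perm_def by simp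
qed

lemma is_perm_filter_ge:
  assumes "is_perm n \<sigma>" and "1 \<le> m" and "m \<le> n"
  shows "is_perm (n + 1 - m) (unshift (m - 1) (filter (\<lambda>x. m \<le> x) \<sigma>))"
proof (rule is_permI)
  have "set (filter (\<lambda>x. m \<le> x) \<sigma>) = {m..n}"
    using assms unfolding is_perm_def by auto
  moreover have "(\<lambda>x. x - (m - 1)) ` {m..n} = {1..n + 1 - m}"
  proof (intro equalityI subsetI)
    fix y assume "y \<in> {1..n + 1 - m}"
    then have "y + (m - 1) \<in> {m..n}" and "y = y + (m - 1) - (m - 1)" using assms by auto
    then show "y \<in> (\<lambda>x. x - (m - 1)) ` {m..n}" by blast
  qed (use assms in auto)
  ultimately show set: "set (unshift (m - 1) (filter (\<lambda>x. m \<le> x) \<sigma>)) = {1..n + 1 - m}"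
    by simp
  have "inj_on (\<lambda>x. x - (m - 1)) {m..n}"
    using assms by (auto simp: inj_on_def)
  then have "distinct (unshift (m - 1) (filter (\<lambda>x. m \<le> x) \<sigma>))"
    using assms \<open>set (filter (\<lambda>x. m \<le> x) \<sigma>) = {m..n}\<close> unfolding is_perm_def
    by (simp add: distinct_map)
  then show "length (unshift (m - 1) (filter (\<lambda>x. m \<le> x) \<sigma>)) = n + 1 - m"
    using distinct_card set by fastforce
qed

section \<open>Containment of 1324\<close>

lemma subseq_index_embedding:
  assumes "subseq xs ys"
  obtains f where "strict_mono f" and "\<And>i. i < length xs \<Longrightarrow> f i < length ys \<and> ys ! f i = xs ! i"
  using assms
proof (induction arbitrary: thesis rule: list_emb.induct)
  case (list_emb_Nil ys)
  show ?case by (rule list_emb_Nil.prems[of id]) (auto simp: strict_mono_def)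
next
  case (list_emb_Cons xs ys y)
  obtain f where "strict_mono f" "\<And>i. i < length xs \<Longrightarrow> f i < length ys \<and> ys ! f i = xs ! i"
    using list_emb_Cons.IH by blast
  then show ?case
    by (intro list_emb_Cons.prems[of "Suc \<circ> f"]) (auto simp: strict_mono_def)
next
  case (list_emb_Cons2 x y xs ys)
  obtain f where f: "strict_mono f" "\<And>i. i < length xs \<Longrightarrow> f i < length ys \<and> ys ! f i = xs ! i"
    using list_emb_Cons2.IH by blast
  define g where "g i = (case i of 0 \<Rightarrow> 0 | Suc j \<Rightarrow> Suc (f j))" for i
  have "strict_mono g"
    using f(1) by (auto simp: strict_mono_Suc_iff g_def split: nat.split)
  moreover have "g i < length (y # ys) \<and> (y # ys) ! g i = (x # xs) ! i"
    if "i < length (x # xs)" for i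
    using that f(2) list_emb_Cons2.hyps by (cases i) (auto simp: g_def)
  ultimately show ?case by (rule list_emb_Cons2.prems)
qed

lemma contains_1324_subseq:
  assumes "contains_1324 xs" and "subseq xs ys"
  shows "contains_1324 ys"
proof -
  obtain i j k l where ijkl: "i < j" "j < k" "k < l" "l < length xs"
    "xs ! i < xs ! k" "xs ! k < xs ! j" "xs ! j < xs ! l"
    using assms(1) unfolding contains_1324_def by blast
  obtain f where f: "strict_mono f" "\<And>i. i < length xs \<Longrightarrow> f i < length ys \<and> ys ! f i = xs ! i"
    using subseq_index_embedding[OF assms(2)] by blast
  have "f i < f j" "f j < f k" "f k < f l" using f(1) ijkl by (simp_all add: strict_mono_less)
  moreover have "f l < length ys" "ys ! f i = xs ! i" "ys ! f j = xs ! j" "ys ! f k = xs ! k"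
    "ys ! f l = xs ! l" using f(2) ijkl by auto
  ultimately show ?thesis unfolding contains_1324_def using ijkl by metis
qed

lemma contains_1324_filter: "contains_1324 (filter P xs) \<Longrightarrow> contains_1324 xs"
  using contains_1324_subseq subseq_filter_left by blast

lemma contains_1324_map_mono:
  assumes "contains_1324 (map f xs)" and "mono f"
  shows "contains_1324 xs"
proof -
  have less: "f a < f b \<Longrightarrow> a < b" for a b
    using \<open>mono f\<close> by (meson leI monoD not_le)
  obtain i j k l where "i < j" "j < k" "k < l" "l < length xs"
    "f (xs ! i) < f (xs ! k)" "f (xs ! k) < f (xs ! j)" "f (xs ! j) < f (xs ! l)"
    using assms(1) unfolding contains_1324_def by auto
  then show ?thesis
    unfolding contains_1324_def by (blast dest: less)
qed

lemma contains_1324_pattern: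
  assumes "a < c" "c < b" "b < d"
  shows "contains_1324 (A @ a # B @ b # C @ c # D @ d # F)"
proof (rule contains_1324_subseq)
  show "contains_1324 [a, b, c, d]"
    unfolding contains_1324_def using assms
    by (intro exI[of _ 0] exI[of _ 1] exI[of _ 2] exI[of _ 3]) simp
  show "subseq [a, b, c, d] (A @ a # B @ b # C @ c # D @ d # F)"
    by (intro list_emb_append2 list_emb_Cons2 list_emb_Nil refl)
qed

section \<open>The product of a primitive with a permutation\<close>

text \<open>The set \<open>S_{n,k}^{1\<prec>n}\<close> without the avoidance condition.\<close>

definition one_prec_max :: "nat \<Rightarrow> nat \<Rightarrow> nat list \<Rightarrow> bool" where
  "one_prec_max n k \<sigma> \<longleftrightarrow> is_perm n \<sigma> \<and> (\<exists>P Q T. \<sigma> = P @ 1 # Q @ n # T \<and> Suc (length Q) = k)"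

lemma one_prec_max_length:
  assumes "one_prec_max n k \<sigma>"
  shows "length \<sigma> = n" and "0 < k" and "k < n"
proof -
  obtain P Q T where \<sigma>: "\<sigma> = P @ 1 # Q @ n # T" "Suc (length Q) = k" and "is_perm n \<sigma>"
    using assms unfolding one_prec_max_def by blast
  then show "length \<sigma> = n" unfolding is_perm_def by blast
  with \<sigma> show "0 < k" "k < n" by auto
qed

lemma S_prec_one_iff:
  assumes "1 \<le> k"
  shows "\<sigma> \<in> S_prec n k 1 \<longleftrightarrow> one_prec_max n k \<sigma> \<and> \<not> contains_1324 \<sigma>"
proof
  assume S: "\<sigma> \<in> S_prec n k 1"
  then have perm: "is_perm n \<sigma>" and gap: "int (pos \<sigma> n) - int (pos \<sigma> 1) = int k"
    and "\<not> contains_1324 \<sigma>"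
    unfolding S_prec_def avoids_1324_def by auto
  have "\<sigma> \<noteq> []"
    using gap assms unfolding pos_def by auto
  then have "1 \<in> set \<sigma>" "n \<in> set \<sigma>"
    using perm unfolding is_perm_def by (auto simp: neq_Nil_conv)
  then obtain \<alpha> R \<alpha>' R' where \<alpha>: "\<sigma> = \<alpha> @ 1 # R" and \<alpha>': "\<sigma> = \<alpha>' @ n # R'"
    by (meson split_list)
  have "distinct \<sigma>" using perm unfolding is_perm_def by blast
  then have "pos \<sigma> 1 = length \<alpha>" "pos \<sigma> n = length \<alpha>'"
    using pos_append_Cons \<alpha> \<alpha>' by metis+
  with gap have "length \<alpha>' = length \<alpha> + k" by simp
  then have "\<alpha>' = \<alpha> @ 1 # take (k - 1) R"
    using arg_cong[OF \<alpha>, of "take (length \<alpha>')"] arg_cong[OF \<alpha>', of "take (length \<alpha>')"] assms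
    by (simp add: take_Cons')
  then have "\<sigma> = \<alpha> @ 1 # take (k - 1) R @ n # R'" and "Suc (length (take (k - 1) R)) = k"
    using \<alpha> \<alpha>' assms \<open>length \<alpha>' = length \<alpha> + k\<close> by auto
  with perm \<open>\<not> contains_1324 \<sigma>\<close> show "one_prec_max n k \<sigma> \<and> \<not> contains_1324 \<sigma>"
    unfolding one_prec_max_def by blast
next
  assume "one_prec_max n k \<sigma> \<and> \<not> contains_1324 \<sigma>"
  then obtain P Q T where perm: "is_perm n \<sigma>" and "\<not> contains_1324 \<sigma>"
    and \<sigma>: "\<sigma> = P @ 1 # Q @ n # T" "Suc (length Q) = k"
    unfolding one_prec_max_def by blast
  have "distinct \<sigma>" using perm unfolding is_perm_def by blast
  then have "pos \<sigma> 1 = length P" and "pos \<sigma> n = length P + k"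
    using pos_append_Cons[of P 1 "Q @ n # T"] pos_append_Cons[of "P @ 1 # Q" n T] \<sigma> by auto
  with perm \<open>\<not> contains_1324 \<sigma>\<close> show "\<sigma> \<in> S_prec n k 1"
    unfolding S_prec_def avoids_1324_def by simp
qed

lemma primitive_iff: "primitive p \<longleftrightarrow> one_prec_max (length p) 1 p \<and> \<not> contains_1324 p"
proof
  assume "primitive p"
  then obtain m where "p \<in> S_prec m 1 1"
    unfolding primitive_def by blast
  moreover from this have "length p = m"
    unfolding S_prec_def avoids_1324_def is_perm_def by simp
  ultimately show "one_prec_max (length p) 1 p \<and> \<not> contains_1324 p"
    using S_prec_one_iff by blast
next
  assume "one_prec_max (length p) 1 p \<and> \<not> contains_1324 p"
  then show "primitive p"
    unfolding primitive_def using S_prec_one_iff one_prec_max_length(3) by fastforce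
qed

lemma odot_explicit:
  assumes "distinct (A @ 1 # m # T1)" and "length (A @ 1 # m # T1) = m"
    and "distinct (P @ 1 # Q @ l # T2)" and "length (P @ 1 # Q @ l # T2) = l"
  shows "odot (A @ 1 # m # T1) (P @ 1 # Q @ l # T2) =
    shift (m - 1) P @ A @ 1 # m # shift (m - 1) Q @ (l + m - 1) # shift (m - 1) T2 @ T1"
proof -
  have "pos (A @ 1 # m # T1) 1 = length A" "pos (P @ 1 # Q @ l # T2) 1 = length P"
    using pos_append_Cons assms(1,3) by blast+
  moreover have "pos (P @ 1 # Q @ l # T2) l = length P + Suc (length Q)"
    using pos_append_Cons[of "P @ 1 # Q" l T2] assms(3) by simp
  ultimately show ?thesis
    unfolding odot_def Let_def using assms(2,4) by simp
qed

lemma filter_blocks: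
  fixes m :: nat
  assumes "\<forall>x\<in>set H1 \<union> set H2 \<union> set H3. m < x" and "\<forall>x\<in>set L1 \<union> set L2. x < m"
    and "1 < m" and "m < N"
  shows "filter (\<lambda>x. x \<le> m) (H1 @ L1 @ 1 # m # H2 @ N # H3 @ L2) = L1 @ 1 # m # L2"
    and "filter (\<lambda>x. m \<le> x) (H1 @ L1 @ 1 # m # H2 @ N # H3 @ L2) = H1 @ m # H2 @ N # H3"
proof -
  have above: "filter (\<lambda>x. x \<le> m) H = [] \<and> filter (\<lambda>x. m \<le> x) H = H" if "\<forall>x\<in>set H. m < x" for H
    using that by (auto simp: filter_empty_conv filter_id_conv)
  have below: "filter (\<lambda>x. x \<le> m) L = L \<and> filter (\<lambda>x. m \<le> x) L = []" if "\<forall>x\<in>set L. x < m" for L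
    using that by (auto simp: filter_empty_conv filter_id_conv)
  show "filter (\<lambda>x. x \<le> m) (H1 @ L1 @ 1 # m # H2 @ N # H3 @ L2) = L1 @ 1 # m # L2"
    and "filter (\<lambda>x. m \<le> x) (H1 @ L1 @ 1 # m # H2 @ N # H3 @ L2) = H1 @ m # H2 @ N # H3"
    using above[of H1] above[of H2] above[of H3] below[of L1] below[of L2] assms by simp_all
qed

lemma primitive_length: "primitive p \<Longrightarrow> 1 < length p"
  using one_prec_max_length(3) unfolding primitive_iff by blast

lemma odot_primitive_form:
  assumes "primitive p" and "one_prec_max l k s"
  obtains A T1 P Q T2 where "p = A @ 1 # length p # T1" and "s = P @ 1 # Q @ l # T2"
    and "Suc (length Q) = k"
    and "\<forall>x\<in>set (shift (length p - 1) P) \<union> set (shift (length p - 1) Q)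
      \<union> set (shift (length p - 1) T2). length p < x"
    and "\<forall>x\<in>set A \<union> set T1. x < length p"
    and "odot p s = shift (length p - 1) P @ A @ 1 # length p # shift (length p - 1) Q
      @ (l + length p - 1) # shift (length p - 1) T2 @ T1"
proof -
  obtain A Q1 T1 where p: "p = A @ 1 # Q1 @ length p # T1" "Suc (length Q1) = 1"
    and perm_p: "is_perm (length p) p"
    using assms(1) unfolding primitive_iff one_prec_max_def by blast
  obtain P Q T2 where s: "s = P @ 1 # Q @ l # T2" "Suc (length Q) = k" and perm_s: "is_perm l s"
    using assms(2) unfolding one_prec_max_def by blast
  have p': "p = A @ 1 # length p # T1" using p by simp
  have "odot p s = shift (length p - 1) P @ A @ 1 # length p # shift (length p - 1) Q
      @ (l + length p - 1) # shift (length p - 1) T2 @ T1"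
    using odot_explicit[of A "length p" T1 P Q l T2] perm_p perm_s p' s(1)
    unfolding is_perm_def by metis
  moreover have "\<forall>x\<in>set A \<union> set T1. x < length p"
    using is_perm_inner_bounds[of "length p" A "[]" T1] perm_p p' by auto
  moreover have "\<forall>x\<in>set (shift (length p - 1) P) \<union> set (shift (length p - 1) Q)
      \<union> set (shift (length p - 1) T2). length p < x"
  proof -
    have "1 < x" if "x \<in> set P \<union> set Q \<union> set T2" for x
      using is_perm_inner_bounds[of l P Q T2] perm_s s(1) that by blast
    with primitive_length[OF assms(1)] show ?thesis by fastforce
  qed
  ultimately show thesis using that p' s by blast
qed

lemma one_prec_max_odot:
  assumes "primitive p" and "one_prec_max l k s"
  shows "one_prec_max (l + length p - 1) (Suc k) (odot p s)"
proof -
  define m where "m = length p"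
  obtain A T1 P Q T2 where p: "p = A @ 1 # m # T1" and s: "s = P @ 1 # Q @ l # T2"
    and k: "Suc (length Q) = k"
    and \<sigma>: "odot p s = shift (m - 1) P @ A @ 1 # m # shift (m - 1) Q @ (l + m - 1)
      # shift (m - 1) T2 @ T1"
    using odot_primitive_form[OF assms] unfolding m_def by metis
  have perm_p: "is_perm m p" and perm_s: "is_perm l s"
    using assms unfolding primitive_iff one_prec_max_def m_def by blast+
  have "1 < m" using primitive_length[OF assms(1)] unfolding m_def .
  have "set (odot p s) = set p \<union> (\<lambda>x. x + (m - 1)) ` set s"
    unfolding \<sigma> using \<open>1 < m\<close> by (auto simp: p s)
  also have "\<dots> = {1..m} \<union> (\<lambda>x. x + (m - 1)) ` {1..l}"
    using perm_p perm_s unfolding is_perm_def by simp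
  also have "\<dots> = {1..m} \<union> {m..l + m - 1}"
    using \<open>1 < m\<close> by (simp only: image_add_atLeastAtMost') simp
  also have "\<dots> = {1..l + m - 1}"
    using \<open>1 < m\<close> one_prec_max_length(3)[OF assms(2)] by auto
  finally have set: "set (odot p s) = {1..l + m - 1}" .
  have "length A + length T1 + 2 = m" "length P + length Q + length T2 + 2 = l"
    using arg_cong[OF p, of length] arg_cong[OF s, of length] perm_s m_def
    unfolding is_perm_def by simp_all
  then have "length (odot p s) = l + m - 1"
    unfolding \<sigma> by simp
  with set have "is_perm (l + m - 1) (odot p s)"
    by (intro is_permI)
  moreover have "odot p s = (shift (m - 1) P @ A) @ 1 # (m # shift (m - 1) Q) @ (l + m - 1)
      # (shift (m - 1) T2 @ T1)"
    unfolding \<sigma> by simp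
  moreover have "Suc (length (m # shift (m - 1) Q)) = Suc k"
    using k by simp
  ultimately have "one_prec_max (l + m - 1) (Suc k) (odot p s)"
    unfolding one_prec_max_def by blast
  then show ?thesis by (simp add: m_def)
qed

lemma odot_nth_after_one:
  assumes "primitive p" and "one_prec_max l k s"
  shows "odot p s ! Suc (pos (odot p s) 1) = length p"
proof -
  obtain A T1 P Q T2 where "odot p s = shift (length p - 1) P @ A @ 1 # length p
      # shift (length p - 1) Q @ (l + length p - 1) # shift (length p - 1) T2 @ T1"
    using odot_primitive_form[OF assms] by metis
  then obtain B R where \<sigma>: "odot p s = B @ 1 # length p # R"
    by (metis append.assoc)
  moreover have "distinct (odot p s)"
    using one_prec_max_odot[OF assms] unfolding one_prec_max_def is_perm_def by blast
  ultimately have "pos (odot p s) 1 = length B"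
    using pos_append_Cons by metis
  moreover have "odot p s ! Suc (length B) = length p"
    unfolding \<sigma> by (simp add: nth_append)
  ultimately show ?thesis by simp
qed

lemma filter_odot:
  assumes "primitive p" and "one_prec_max l k s"
  shows "filter (\<lambda>x. x \<le> length p) (odot p s) = p"
    and "unshift (length p - 1) (filter (\<lambda>x. length p \<le> x) (odot p s)) = s"
proof -
  obtain A T1 P Q T2 where p: "p = A @ 1 # length p # T1" and s: "s = P @ 1 # Q @ l # T2"
    and above: "\<forall>x\<in>set (shift (length p - 1) P) \<union> set (shift (length p - 1) Q)
      \<union> set (shift (length p - 1) T2). length p < x"
    and below: "\<forall>x\<in>set A \<union> set T1. x < length p"
    and \<sigma>: "odot p s = shift (length p - 1) P @ A @ 1 # length p # shift (length p - 1) Q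
      @ (l + length p - 1) # shift (length p - 1) T2 @ T1"
    using odot_primitive_form[OF assms] by metis
  have "1 < l"
    using one_prec_max_length(2,3)[OF assms(2)] by simp
  then have "length p < l + length p - 1" by simp
  note blocks = filter_blocks[OF above below primitive_length[OF assms(1)] this]
  have "filter (\<lambda>x. x \<le> length p) (odot p s) = A @ 1 # length p # T1"
    unfolding \<sigma> by (rule blocks(1))
  also have "\<dots> = p"
    using p by (rule sym)
  finally show "filter (\<lambda>x. x \<le> length p) (odot p s) = p" .
  have "unshift (length p - 1) (filter (\<lambda>x. length p \<le> x) (odot p s)) = P @ 1 # Q @ l # T2"
    unfolding \<sigma> blocks(2) using primitive_length[OF assms(1)] by (simp add: comp_def)
  also have "\<dots> = s"
    using s by (rule sym)
  finally show "unshift (length p - 1) (filter (\<lambda>x. length p \<le> x) (odot p s)) = s" .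
qed

lemma odot_cancel:
  assumes "primitive p" and "one_prec_max l k s" and "primitive q" and "one_prec_max l' k' t"
    and "odot p s = odot q t"
  shows "p = q" and "s = t"
proof -
  have "length p = length q"
    using odot_nth_after_one[OF assms(1,2)] odot_nth_after_one[OF assms(3,4)] assms(5) by simp
  then show "p = q" and "s = t"
    using filter_odot[OF assms(1,2)] filter_odot[OF assms(3,4)] assms(5) by metis+
qed

section \<open>Uniqueness and existence of the factorisation\<close>

lemma one_prec_max_odot_chain:
  assumes "ps \<noteq> []" and "\<forall>p\<in>set ps. primitive p"
  shows "one_prec_max (sum_list (map length ps) + 1 - length ps) (length ps) (odot_chain ps)"
  using assms
proof (induction ps rule: odot_chain.induct)
  case (2 p)
  then show ?case by (simp add: primitive_iff)
next
  case (3 p q ps)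
  let ?N = "sum_list (map length (q # ps)) + 1 - length (q # ps)"
  have chain: "one_prec_max ?N (length (q # ps)) (odot_chain (q # ps))"
    using "3.IH" "3.prems"(2) by simp
  have "one_prec_max (?N + length p - 1) (Suc (length (q # ps))) (odot p (odot_chain (q # ps)))"
    by (rule one_prec_max_odot) (use "3.prems"(2) chain in simp_all)
  moreover have "?N + length p - 1 = sum_list (map length (p # q # ps)) + 1 - length (p # q # ps)"
    using one_prec_max_length(3)[OF chain] primitive_length[of p] "3.prems"(2) by simp
  ultimately show ?case by simp
qed simp

lemma odot_chain_inj:
  assumes "length ps = length qs" and "\<forall>p\<in>set ps. primitive p" and "\<forall>q\<in>set qs. primitive q"
    and "odot_chain ps = odot_chain qs"
  shows "ps = qs"
  using assms
proof (induction ps arbitrary: qs rule: odot_chain.induct)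
  case (2 p)
  from "2.prems"(1) obtain q where "qs = [q]"
    by (cases qs) auto
  with "2.prems"(4) show ?case by simp
next
  case (3 p p' ps)
  from "3.prems"(1) obtain q q' qs' where qs: "qs = q # q' # qs'"
    by (metis Suc_length_conv length_Cons)
  have "one_prec_max (sum_list (map length (p' # ps)) + 1 - length (p' # ps)) (length (p' # ps))
      (odot_chain (p' # ps))"
    by (rule one_prec_max_odot_chain) (use "3.prems"(2) in simp_all)
  moreover have "one_prec_max (sum_list (map length (q' # qs')) + 1 - length (q' # qs'))
      (length (q' # qs')) (odot_chain (q' # qs'))"
    by (rule one_prec_max_odot_chain) (use "3.prems"(3) qs in simp_all)
  moreover have "odot p (odot_chain (p' # ps)) = odot q (odot_chain (q' # qs'))"
    using "3.prems"(4) qs by simp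
  ultimately have "p = q" and "odot_chain (p' # ps) = odot_chain (q' # qs')"
    using odot_cancel "3.prems"(2,3) qs by (metis list.set_intros(1))+
  moreover have "p' # ps = q' # qs'"
    by (rule "3.IH") (use "3.prems" qs \<open>odot_chain (p' # ps) = odot_chain (q' # qs')\<close> in simp_all)
  ultimately show ?case using qs by simp
qed simp

lemma split_at_pivot:
  fixes m :: nat
  assumes "m \<notin> set xs"
    and "\<And>u h v y. xs = u @ h # v \<Longrightarrow> y \<in> set v \<Longrightarrow> h < m \<Longrightarrow> m < y \<Longrightarrow> False"
  obtains hi lo where "xs = hi @ lo" and "\<forall>x\<in>set hi. m < x" and "\<forall>x\<in>set lo. x < m"
proof
  show "xs = takeWhile (\<lambda>x. m < x) xs @ dropWhile (\<lambda>x. m < x) xs" by simp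
  show "\<forall>x\<in>set (takeWhile (\<lambda>x. m < x) xs). m < x"
    by (auto dest: set_takeWhileD)
  show "\<forall>y\<in>set (dropWhile (\<lambda>x. m < x) xs). y < m"
  proof (rule ccontr)
    assume "\<not> (\<forall>y\<in>set (dropWhile (\<lambda>x. m < x) xs). y < m)"
    then obtain y where y: "y \<in> set (dropWhile (\<lambda>x. m < x) xs)" "m \<le> y" by auto
    then obtain h r where hr: "dropWhile (\<lambda>x. m < x) xs = h # r"
      by (cases "dropWhile (\<lambda>x. m < x) xs") auto
    then have xs: "xs = takeWhile (\<lambda>x. m < x) xs @ h # r" and "\<not> m < h"
      by (simp_all add: dropWhile_eq_Cons_conv)
    moreover have "h \<in> set xs" using xs by (metis in_set_conv_decomp)
    moreover have "y \<in> set xs" using y(1) by (rule set_dropWhileD)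
    ultimately have "h \<noteq> m" "y \<noteq> m" using assms(1) by auto
    with \<open>\<not> m < h\<close> y(2) have "h < m" "m < y"
      by auto
    with y(1) hr have "y \<in> set r" by auto
    with xs \<open>h < m\<close> \<open>m < y\<close> show False by (intro assms(2))
  qed
qed

text \<open>The three conclusions exclude the occurrences \<open>1 m x n\<close>, \<open>h y m n\<close> and \<open>1 m h y\<close>
  of the pattern 1324.\<close>

lemma avoids_1324_block_form:
  assumes "\<not> contains_1324 \<sigma>" and "is_perm n \<sigma>" and \<sigma>: "\<sigma> = \<alpha> @ 1 # m # \<beta> @ n # \<gamma>"
  obtains \<alpha>H \<alpha>L \<gamma>H \<gamma>L where "\<sigma> = \<alpha>H @ \<alpha>L @ 1 # m # \<beta> @ n # \<gamma>H @ \<gamma>L"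
    and "\<forall>x\<in>set \<alpha>H \<union> set \<beta> \<union> set \<gamma>H. m < x" and "\<forall>x\<in>set \<alpha>L \<union> set \<gamma>L. x < m"
proof -
  have bounds: "1 < x \<and> x < n" if "x \<in> set \<alpha> \<union> set (m # \<beta>) \<union> set \<gamma>" for x
    using is_perm_inner_bounds[of n \<alpha> "m # \<beta>" \<gamma> x] assms(2) \<sigma> that by simp
  have "m \<notin> set \<alpha>" "m \<notin> set \<beta>" "m \<notin> set \<gamma>"
    using assms(2) \<sigma> unfolding is_perm_def by auto
  have "1 < m" "m < n" using bounds[of m] by simp_all
  have \<beta>: "\<forall>x\<in>set \<beta>. m < x"
  proof
    fix x assume "x \<in> set \<beta>"
    then obtain u v where "\<beta> = u @ x # v" by (meson split_list)
    moreover have "1 < x" "x \<noteq> m"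
      using \<open>x \<in> set \<beta>\<close> bounds \<open>m \<notin> set \<beta>\<close> by auto
    ultimately show "m < x"
      using assms(1) contains_1324_pattern[of 1 x m n \<alpha> "[]" u v \<gamma>] \<open>m < n\<close> \<sigma> by fastforce
  qed
  obtain \<alpha>H \<alpha>L where "\<alpha> = \<alpha>H @ \<alpha>L" "\<forall>x\<in>set \<alpha>H. m < x" "\<forall>x\<in>set \<alpha>L. x < m"
  proof (rule split_at_pivot)
    show "m \<notin> set \<alpha>" by fact
    fix u h v y assume "\<alpha> = u @ h # v" "y \<in> set v" "h < m" "m < y"
    moreover from this obtain v1 v2 where "v = v1 @ y # v2" by (meson split_list)
    moreover have "y < n" using calculation bounds by auto
    ultimately show False
      using assms(1) contains_1324_pattern[of h m y n u v1 "v2 @ [1]" \<beta> \<gamma>] \<sigma> by simp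
  qed
  moreover obtain \<gamma>H \<gamma>L where "\<gamma> = \<gamma>H @ \<gamma>L" "\<forall>x\<in>set \<gamma>H. m < x" "\<forall>x\<in>set \<gamma>L. x < m"
  proof (rule split_at_pivot)
    show "m \<notin> set \<gamma>" by fact
    fix u h v y assume "\<gamma> = u @ h # v" "y \<in> set v" "h < m" "m < y"
    moreover from this obtain v1 v2 where "v = v1 @ y # v2" by (meson split_list)
    moreover have "1 < h" using calculation bounds by auto
    ultimately show False
      using assms(1) contains_1324_pattern[of 1 h m y \<alpha> "[]" "\<beta> @ n # u" v1 v2] \<sigma> by simp
  qed
  ultimately show thesis
    using \<beta> \<sigma> by (intro that) auto
qed

lemma odot_block_form:
  assumes perm: "is_perm n \<sigma>" and \<sigma>: "\<sigma> = \<alpha>H @ \<alpha>L @ 1 # m # \<beta> @ n # \<gamma>H @ \<gamma>L"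
    and above: "\<forall>x\<in>set \<alpha>H \<union> set \<beta> \<union> set \<gamma>H. m < x" and below: "\<forall>x\<in>set \<alpha>L \<union> set \<gamma>L. x < m"
  defines "p \<equiv> \<alpha>L @ 1 # m # \<gamma>L" and "s \<equiv> unshift (m - 1) (\<alpha>H @ m # \<beta> @ n # \<gamma>H)"
  shows "one_prec_max m 1 p" and "one_prec_max (n + 1 - m) (Suc (length \<beta>)) s"
    and "\<sigma> = odot p s"
proof -
  have "1 < m" "m < n"
    using is_perm_inner_bounds[of n "\<alpha>H @ \<alpha>L" "m # \<beta>" "\<gamma>H @ \<gamma>L" m] perm \<sigma> by simp_all
  note blocks = filter_blocks[OF above below this]
  have perm_p: "is_perm m p"
    using is_perm_filter_le[OF perm, of m] \<open>m < n\<close> unfolding p_def \<sigma> blocks by simp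
  then show "one_prec_max m 1 p"
    unfolding one_prec_max_def p_def by auto
  have perm_s: "is_perm (n + 1 - m) s"
    using is_perm_filter_ge[OF perm, of m] \<open>1 < m\<close> \<open>m < n\<close> unfolding s_def \<sigma> blocks by simp
  have s_form: "s = unshift (m - 1) \<alpha>H @ 1 # unshift (m - 1) \<beta> @ (n + 1 - m) # unshift (m - 1) \<gamma>H"
    unfolding s_def using \<open>1 < m\<close> \<open>m < n\<close> by simp
  with perm_s show "one_prec_max (n + 1 - m) (Suc (length \<beta>)) s"
    unfolding one_prec_max_def by fastforce
  have shift_unshift: "shift (m - 1) (unshift (m - 1) xs) = xs" if "\<forall>x\<in>set xs. m < x" for xs
    using that by (induction xs) auto
  have "odot p s = shift (m - 1) (unshift (m - 1) \<alpha>H) @ \<alpha>L @ 1 # m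
      # shift (m - 1) (unshift (m - 1) \<beta>) @ (n + 1 - m + m - 1)
      # shift (m - 1) (unshift (m - 1) \<gamma>H) @ \<gamma>L"
    using odot_explicit perm_p perm_s unfolding p_def s_form is_perm_def by metis
  also have "\<dots> = \<sigma>"
    using shift_unshift above \<open>m < n\<close> unfolding \<sigma> by simp
  finally show "\<sigma> = odot p s" by simp
qed

lemma S_prec_odot_split:
  assumes "\<sigma> \<in> S_prec n k 1" and "2 \<le> k"
  obtains p s where "primitive p" and "s \<in> S_prec (n + 1 - length p) (k - 1) 1"
    and "\<sigma> = odot p s"
proof -
  have "one_prec_max n k \<sigma>" and avoids: "\<not> contains_1324 \<sigma>"
    using assms S_prec_one_iff by auto
  then obtain \<alpha> Q \<gamma> where "\<sigma> = \<alpha> @ 1 # Q @ n # \<gamma>" and "Suc (length Q) = k"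
    and perm: "is_perm n \<sigma>"
    unfolding one_prec_max_def by blast
  with assms(2) obtain m \<beta> where \<sigma>0: "\<sigma> = \<alpha> @ 1 # m # \<beta> @ n # \<gamma>" and k: "k - 1 = Suc (length \<beta>)"
    by (cases Q) auto
  obtain \<alpha>H \<alpha>L \<gamma>H \<gamma>L where \<sigma>: "\<sigma> = \<alpha>H @ \<alpha>L @ 1 # m # \<beta> @ n # \<gamma>H @ \<gamma>L"
    and above: "\<forall>x\<in>set \<alpha>H \<union> set \<beta> \<union> set \<gamma>H. m < x" and below: "\<forall>x\<in>set \<alpha>L \<union> set \<gamma>L. x < m"
    using avoids_1324_block_form[OF avoids perm \<sigma>0] by blast
  define p where "p = \<alpha>L @ 1 # m # \<gamma>L"
  define s where "s = unshift (m - 1) (\<alpha>H @ m # \<beta> @ n # \<gamma>H)"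
  note factors = odot_block_form[OF perm \<sigma> above below, folded p_def s_def]
  have "1 < m" "m < n"
    using one_prec_max_length(3)[OF factors(1)] one_prec_max_length(2,3)[OF factors(2)] by simp_all
  note blocks = filter_blocks[OF above below this]
  have "mono (\<lambda>x::nat. x - (m - 1))"
    by (simp add: mono_def diff_le_mono)
  moreover have "p = filter (\<lambda>x. x \<le> m) \<sigma>" and "s = unshift (m - 1) (filter (\<lambda>x. m \<le> x) \<sigma>)"
    unfolding p_def s_def \<sigma> blocks by simp_all
  ultimately have "\<not> contains_1324 p" and "\<not> contains_1324 s"
    using avoids contains_1324_filter contains_1324_map_mono by metis+
  moreover have "length p = m"
    using one_prec_max_length(1)[OF factors(1)] .
  ultimately have "primitive p" and "s \<in> S_prec (n + 1 - length p) (k - 1) 1"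
    using factors(1,2) k S_prec_one_iff[of "k - 1"] unfolding primitive_iff by simp_all
  then show thesis using factors(3) by (rule that)
qed

lemma S_prec_odot_chain_exists:
  assumes "\<sigma> \<in> S_prec n k 1" and "1 \<le> k"
  shows "\<exists>ps. length ps = k \<and> (\<forall>p\<in>set ps. primitive p) \<and> \<sigma> = odot_chain ps"
  using assms(2,1)
proof (induction k arbitrary: \<sigma> n rule: nat_induct_at_least)
  case base
  then have "one_prec_max n 1 \<sigma>" and "\<not> contains_1324 \<sigma>"
    using S_prec_one_iff by auto
  moreover have "length \<sigma> = n"
    using \<open>one_prec_max n 1 \<sigma>\<close> by (rule one_prec_max_length(1))
  ultimately have "primitive \<sigma>"
    unfolding primitive_iff by simp
  then show ?case
    by (intro exI[of _ "[\<sigma>]"]) simp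
next
  case (Suc k)
  obtain p s where "primitive p" and "s \<in> S_prec (n + 1 - length p) k 1" and "\<sigma> = odot p s"
    using S_prec_odot_split[OF Suc.prems] Suc.hyps by auto
  moreover obtain ps where "length ps = k" "\<forall>p\<in>set ps. primitive p" "s = odot_chain ps"
    using Suc.IH calculation(2) by blast
  moreover have "odot_chain (p # ps) = odot p (odot_chain ps)"
    using \<open>length ps = k\<close> Suc.hyps by (cases ps) auto
  ultimately show ?case
    by (intro exI[of _ "p # ps"]) simp
qed

theorem corollary2p5:
  fixes n k :: nat and \<sigma> :: "nat list"
  assumes "k \<ge> 1" and "n \<ge> k + 1" and "\<sigma> \<in> S_prec n k 1"
  shows "(\<exists>!ps. length ps = k \<and> (\<forall>p\<in>set ps. primitive p) \<and> \<sigma> = odot_chain ps)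
    \<and> (\<forall>ps. length ps = k \<and> (\<forall>p\<in>set ps. primitive p) \<and> \<sigma> = odot_chain ps
          \<longrightarrow> sum_list (map length ps) = n + k - 1)"
proof (intro conjI allI impI)
  show "\<exists>!ps. length ps = k \<and> (\<forall>p\<in>set ps. primitive p) \<and> \<sigma> = odot_chain ps"
    using S_prec_odot_chain_exists[OF assms(3,1)] odot_chain_inj by (metis (no_types, lifting))
next
  fix ps assume ps: "length ps = k \<and> (\<forall>p\<in>set ps. primitive p) \<and> \<sigma> = odot_chain ps"
  moreover have "ps \<noteq> []"
    using ps assms(1) by auto
  ultimately have "one_prec_max (sum_list (map length ps) + 1 - k) k \<sigma>"
    using one_prec_max_odot_chain[of ps] by blast
  moreover have "length \<sigma> = n"
    using assms(3) unfolding S_prec_def avoids_1324_def is_perm_def by simp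
  ultimately show "sum_list (map length ps) = n + k - 1"
    using one_prec_max_length(1,3) by fastforce
qed

end
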